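(* Let $\Bbbk$ be a field, $V$ a finite-dimensional $\Bbbk$-vector space with $\dim V>1$ and $R$ a Hecke symmetry on $V$ with parameter $q$. Suppose $\dim\Upsilon^{(3)}=1$. Then the action of $y_3$ on $V^{\otimes3}$ is nonzero.
   Context: A Hecke symmetry on $V$ with parameter $0\neq q\in\Bbbk$ is a linear map $R:V\otimes V\to V\otimes V$ satisfying $(R\otimes\mathrm{Id}_V)(\mathrm{Id}_V\otimes R)(R\otimes\mathrm{Id}_V)=(\mathrm{Id}_V\otimes R)(R\otimes\mathrm{Id}_V)(\mathrm{Id}_V\otimes R)$ and $(R-q\,\mathrm{Id})(R+\mathrm{Id})=0$ ($q=-1$ allowed). On $V^{\otimes 3}$ let $R_1=R\otimes\mathrm{Id}_V$, $R_2=\mathrm{Id}_V\otimes R$. $\Upsilon^{(3)}=(R_1-q\,\mathrm{Id})V^{\otimes3}\cap(R_2-q\,\mathrm{Id})V^{\otimes3}$. $y_3=\sum_{\sigma\in S_3}(-1)^{\ell(\sigma)}q^{3-\ell(\sigma)}T_\sigma$ in the Hecke algebra ${\cal H}_3$ (generators $T_1,T_2$, relations $T_1T_2T_1=T_2T_1T_2$, $(T_i-q)(T_i+1)=0$; $T_\sigma$ is the product of generators along a reduced expression of $\sigma$ in $\tau_1=(12),\tau_2=(23)$, $\ell$ the length), acting on $V^{\otimes3}$ via $T_i\mapsto R_i$. Explicitly $y_3=q^3-q^2(T_1+T_2)+q(T_1T_2+T_2T_1)-T_1T_2T_1$. *)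

theory Defs
  imports Complex_Main "HOL-Library.Function_Algebras"
begin

text \<open>V is the coordinate space over the finite index type 'n (dim V = CARD('n)).
  V\<otimes>V is modelled as 'n \<times> 'n \<Rightarrow> 'k, V\<otimes>V\<otimes>V as 'n \<times> 'n \<times> 'n \<Rightarrow> 'k.
  A linear map R on V\<otimes>V is given by its matrix R (i,j) (k,l).\<close>

type_synonym ('k,'n) lin2 = "'n \<times> 'n \<Rightarrow> 'n \<times> 'n \<Rightarrow> 'k"

definition scalef :: "'k::field \<Rightarrow> ('a \<Rightarrow> 'k) \<Rightarrow> ('a \<Rightarrow> 'k)" where
  "scalef c f = (\<lambda>x. c * f x)"

definition app2 :: "('k::field,'n::finite) lin2 \<Rightarrow> ('n \<times> 'n \<Rightarrow> 'k) \<Rightarrow> ('n \<times> 'n \<Rightarrow> 'k)" where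
  "app2 R x = (\<lambda>p. \<Sum>r\<in>UNIV. R p r * x r)"

text \<open>R1 = R \<otimes> Id and R2 = Id \<otimes> R on V\<otimes>V\<otimes>V.\<close>
definition Rone :: "('k::field,'n::finite) lin2 \<Rightarrow> ('n \<times> 'n \<times> 'n \<Rightarrow> 'k) \<Rightarrow> ('n \<times> 'n \<times> 'n \<Rightarrow> 'k)" where
  "Rone R t = (\<lambda>(i,j,m). \<Sum>(k,l)\<in>UNIV. R (i,j) (k,l) * t (k,l,m))"

definition Rtwo :: "('k::field,'n::finite) lin2 \<Rightarrow> ('n \<times> 'n \<times> 'n \<Rightarrow> 'k) \<Rightarrow> ('n \<times> 'n \<times> 'n \<Rightarrow> 'k)" where
  "Rtwo R t = (\<lambda>(i,j,m). \<Sum>(k,l)\<in>UNIV. R (j,m) (k,l) * t (i,k,l))"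

definition hecke_symmetry :: "('k::field,'n::finite) lin2 \<Rightarrow> 'k \<Rightarrow> bool" where
  "hecke_symmetry R q \<longleftrightarrow>
     (\<forall>t. Rone R (Rtwo R (Rone R t)) = Rtwo R (Rone R (Rtwo R t))) \<and>
     (\<forall>x. app2 R (app2 R x + x) - scalef q (app2 R x + x) = 0)"

definition Upsilon3 :: "('k::field,'n::finite) lin2 \<Rightarrow> 'k \<Rightarrow> ('n \<times> 'n \<times> 'n \<Rightarrow> 'k) set" where
  "Upsilon3 R q = {t. (\<exists>s. t = Rone R s - scalef q s) \<and> (\<exists>s. t = Rtwo R s - scalef q s)}"

definition y3 :: "('k::field,'n::finite) lin2 \<Rightarrow> 'k \<Rightarrow> ('n \<times> 'n \<times> 'n \<Rightarrow> 'k) \<Rightarrow> ('n \<times> 'n \<times> 'n \<Rightarrow> 'k)" where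
  "y3 R q t = scalef (q^3) t - scalef (q^2) (Rone R t + Rtwo R t)
     + scalef q (Rone R (Rtwo R t) + Rtwo R (Rone R t)) - Rone R (Rtwo R (Rone R t))"

end

theory Submission
  imports Defs
begin

text \<open>Write Q_i for the action of q - T_i. The Hecke relation says Q_i^2 = (q + 1) Q_i, so
  \<Upsilon>^(3) = Im Q_1 \<inter> Im Q_2 consists, for q \<noteq> -1, of the common (q + 1)-eigenvectors of Q_1
  and Q_2; and y_3 = Q_1 Q_2 Q_1 - q Q_1. Suppose y_3 = 0, which for \<Upsilon>^(3) \<noteq> 0 already
  excludes q = -1. On V^(4) the operators Q_1, Q_2, Q_3 then satisfy
  Q_i Q_(i+1) Q_i = q Q_i for i = 1, 2, and Q_1 commutes with Q_3; a short computation shows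
  that every common (q + 1)-eigenvector of Q_1 and Q_2 is one of Q_3 as well. For u spanning
  \<Upsilon>^(3) and any v in V this applies to u \<otimes> v, so each slice u(a, -, -) \<otimes> v lies in
  \<Upsilon>^(3) and is a multiple of u, which is impossible when dim V > 1.\<close>

lemma scalef_apply: "scalef c f x = c * f x"
  by (simp add: scalef_def)

lemma scalef_scalef [simp]: "scalef a (scalef b f) = scalef (a * b) f"
  by (simp add: fun_eq_iff scalef_apply)

lemma scalef_cancel:
  assumes "scalef c f = scalef c g" and "c \<noteq> 0"
  shows "f = g"
  using assms by (simp add: fun_eq_iff scalef_apply)

lemma range_eq_eigenspace:
  fixes Q :: "('a \<Rightarrow> 'k::field) \<Rightarrow> 'a \<Rightarrow> 'k"
  assumes homogeneous: "\<And>c t. Q (scalef c t) = scalef c (Q t)"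
    and square: "\<And>t. Q (Q t) = scalef e (Q t)"
    and "e \<noteq> 0"
  shows "range Q = {t. Q t = scalef e t}"
proof (intro set_eqI iffI)
  fix t
  assume "t \<in> range Q"
  then show "t \<in> {t. Q t = scalef e t}"
    using square by auto
next
  fix t
  assume "t \<in> {t. Q t = scalef e t}"
  then have "t = Q (scalef (inverse e) t)"
    using homogeneous \<open>e \<noteq> 0\<close> by (simp add: fun_eq_iff scalef_apply)
  then show "t \<in> range Q"
    by blast
qed

lemma common_eigenvector_propagates:
  fixes Q1 Q2 Q3 :: "('a \<Rightarrow> 'k::field) \<Rightarrow> 'a \<Rightarrow> 'k"
  assumes homogeneous: "\<And>c t. Q1 (scalef c t) = scalef c (Q1 t)"
      "\<And>c t. Q2 (scalef c t) = scalef c (Q2 t)" "\<And>c t. Q3 (scalef c t) = scalef c (Q3 t)"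
    and commute: "\<And>t. Q1 (Q3 t) = Q3 (Q1 t)"
    and braid12: "\<And>t. Q1 (Q2 (Q1 t)) = scalef q (Q1 t)"
    and braid23: "\<And>t. Q2 (Q3 (Q2 t)) = scalef q (Q2 t)"
    and "q \<noteq> 0" and "q + 1 \<noteq> 0"
    and w1: "Q1 w = scalef (q + 1) w" and w2: "Q2 w = scalef (q + 1) w"
  shows "Q3 w = scalef (q + 1) w"
proof -
  define z where "z = Q3 w"
  have z1: "Q1 z = scalef (q + 1) z"
    by (simp only: z_def commute w1 homogeneous)
  have "scalef (q + 1) (Q2 z) = Q2 (Q3 (Q2 w))"
    by (simp only: z_def w2 homogeneous)
  also have "\<dots> = scalef (q + 1) (scalef q w)"
    by (subst braid23) (simp add: w2 mult.commute)
  finally have z2: "Q2 z = scalef q w"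
    using \<open>q + 1 \<noteq> 0\<close> by (rule scalef_cancel)
  have "scalef (q * (q + 1)) z = Q1 (Q2 (Q1 z))"
    by (subst braid12) (simp add: z1)
  also have "\<dots> = scalef (q * (q + 1)) (scalef (q + 1) w)"
    by (simp only: z1 z2 w1 homogeneous scalef_scalef mult_ac)
  finally have "z = scalef (q + 1) w"
    by (rule scalef_cancel) (simp add: \<open>q \<noteq> 0\<close> \<open>q + 1 \<noteq> 0\<close>)
  then show ?thesis
    by (simp only: z_def)
qed

lemma dim_eq_1_generatorE:
  fixes U :: "('a \<Rightarrow> 'k::field) set"
  assumes "vector_space.dim scalef U = 1"
  obtains u where "u \<in> U" and "u \<noteq> 0" and "\<And>t. t \<in> U \<Longrightarrow> \<exists>c. t = scalef c u"
proof -
  interpret vector_space "scalef :: 'k \<Rightarrow> ('a \<Rightarrow> 'k) \<Rightarrow> _"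
    by unfold_locales (simp_all add: fun_eq_iff scalef_apply algebra_simps)
  obtain B where B: "B \<subseteq> U" "independent B" "U \<subseteq> span B" "card B = dim U"
    using basis_exists by blast
  then obtain u where "B = {u}"
    using assms by (auto simp: card_Suc_eq)
  then show ?thesis
    using that B dependent_single span_singleton by auto
qed

definition first_slice :: "'a \<Rightarrow> ('a \<times> 'b \<times> 'c \<times> 'd \<Rightarrow> 'k) \<Rightarrow> 'b \<times> 'c \<times> 'd \<Rightarrow> 'k"
  where "first_slice a w = (\<lambda>(b, c, d). w (a, b, c, d))"

definition last_slice :: "'d \<Rightarrow> ('a \<times> 'b \<times> 'c \<times> 'd \<Rightarrow> 'k) \<Rightarrow> 'a \<times> 'b \<times> 'c \<Rightarrow> 'k"
  where "last_slice d w = (\<lambda>(a, b, c). w (a, b, c, d))"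

text \<open>Functions of four indices model V^(4); on_first3 F and on_last3 F are F \<otimes> Id and
  Id \<otimes> F.\<close>

definition on_first3 ::
    "(('a \<times> 'b \<times> 'c \<Rightarrow> 'k) \<Rightarrow> 'a \<times> 'b \<times> 'c \<Rightarrow> 'k) \<Rightarrow> ('a \<times> 'b \<times> 'c \<times> 'd \<Rightarrow> 'k) \<Rightarrow> 'a \<times> 'b \<times> 'c \<times> 'd \<Rightarrow> 'k"
  where "on_first3 F w = (\<lambda>(a, b, c, d). F (last_slice d w) (a, b, c))"

definition on_last3 ::
    "(('b \<times> 'c \<times> 'd \<Rightarrow> 'k) \<Rightarrow> 'b \<times> 'c \<times> 'd \<Rightarrow> 'k) \<Rightarrow> ('a \<times> 'b \<times> 'c \<times> 'd \<Rightarrow> 'k) \<Rightarrow> 'a \<times> 'b \<times> 'c \<times> 'd \<Rightarrow> 'k"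
  where "on_last3 F w = (\<lambda>(a, b, c, d). F (first_slice a w) (b, c, d))"

definition tensor_last :: "('a \<times> 'b \<times> 'c \<Rightarrow> 'k::times) \<Rightarrow> ('d \<Rightarrow> 'k) \<Rightarrow> 'a \<times> 'b \<times> 'c \<times> 'd \<Rightarrow> 'k"
  where "tensor_last u v = (\<lambda>(a, b, c, d). u (a, b, c) * v d)"

lemma on_first3_apply [simp]: "on_first3 F w (a, b, c, d) = F (last_slice d w) (a, b, c)"
  by (simp add: on_first3_def)

lemma on_last3_apply [simp]: "on_last3 F w (a, b, c, d) = F (first_slice a w) (b, c, d)"
  by (simp add: on_last3_def)

lemma first_slice_on_last3 [simp]: "first_slice a (on_last3 F w) = F (first_slice a w)"
  by (simp add: first_slice_def on_last3_def)

lemma last_slice_on_first3 [simp]: "last_slice d (on_first3 F w) = F (last_slice d w)"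
  by (simp add: last_slice_def on_first3_def)

lemma first_slice_scalef [simp]: "first_slice a (scalef c w) = scalef c (first_slice a w)"
  by (simp add: first_slice_def fun_eq_iff scalef_apply)

lemma last_slice_scalef [simp]: "last_slice d (scalef c w) = scalef c (last_slice d w)"
  by (simp add: last_slice_def fun_eq_iff scalef_apply)

lemma on_first3_comp: "on_first3 F (on_first3 G w) = on_first3 (\<lambda>t. F (G t)) w"
  by (simp add: fun_eq_iff split_paired_All)

lemma on_last3_comp: "on_last3 F (on_last3 G w) = on_last3 (\<lambda>t. F (G t)) w"
  by (simp add: fun_eq_iff split_paired_All)

lemma on_first3_scalef_op: "on_first3 (\<lambda>t. scalef c (F t)) w = scalef c (on_first3 F w)"
  by (simp add: fun_eq_iff split_paired_All scalef_apply)

lemma on_last3_scalef_op: "on_last3 (\<lambda>t. scalef c (F t)) w = scalef c (on_last3 F w)"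
  by (simp add: fun_eq_iff split_paired_All scalef_apply)

lemma on_first3_homogeneous:
  "(\<And>c t. F (scalef c t) = scalef c (F t)) \<Longrightarrow> on_first3 F (scalef c w) = scalef c (on_first3 F w)"
  by (simp add: fun_eq_iff split_paired_All scalef_apply)

lemma on_last3_homogeneous:
  "(\<And>c t. F (scalef c t) = scalef c (F t)) \<Longrightarrow> on_last3 F (scalef c w) = scalef c (on_last3 F w)"
  by (simp add: fun_eq_iff split_paired_All scalef_apply)

lemma on_first3_tensor_last:
  assumes "\<And>c t. F (scalef c t) = scalef c (F t)" and "F u = scalef e u"
  shows "on_first3 F (tensor_last u v) = scalef e (tensor_last u v)"
proof -
  have slice: "last_slice d (tensor_last u v) = scalef (v d) u" for d
    by (simp add: last_slice_def tensor_last_def fun_eq_iff scalef_apply mult.commute)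
  show ?thesis
    by (simp add: fun_eq_iff split_paired_All scalef_apply slice assms)
      (simp add: tensor_last_def scalef_apply mult_ac)
qed

lemma card_le_1_if_first_slices_multiple:
  fixes u :: "'n::finite \<times> 'n \<times> 'n \<Rightarrow> 'k::field"
  assumes "u \<noteq> 0" and multiple: "\<And>a v. \<exists>c. first_slice a (tensor_last u v) = scalef c u"
  shows "card (UNIV :: 'n set) \<le> 1"
proof (rule ccontr)
  assume "\<not> card (UNIV :: 'n set) \<le> 1"
  then obtain i j :: 'n where "i \<noteq> j"
    using card_le_Suc0_iff_eq[of "UNIV :: 'n set"] by auto
  obtain a b c where abc: "u (a, b, c) \<noteq> 0"
    using \<open>u \<noteq> 0\<close> by (auto simp: fun_eq_iff)
  have slice: "first_slice a (tensor_last u (\<lambda>d. if d = k then 1 else 0)) (b, c, d) =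
      (if d = k then u (a, b, c) else 0)" for k d
    by (simp add: first_slice_def tensor_last_def)
  obtain ci cj where
    ci: "first_slice a (tensor_last u (\<lambda>d. if d = i then 1 else 0)) = scalef ci u" and
    cj: "first_slice a (tensor_last u (\<lambda>d. if d = j then 1 else 0)) = scalef cj u"
    using multiple by meson
  have "u (a, b, c) = cj * u (b, c, j)" and "0 = cj * u (b, c, i)"
    using fun_cong[OF cj, of "(b, c, j)"] fun_cong[OF cj, of "(b, c, i)"] \<open>i \<noteq> j\<close>
    by (simp_all add: slice scalef_apply)
  moreover have "u (a, b, c) = ci * u (b, c, i)"
    using fun_cong[OF ci, of "(b, c, i)"] by (simp add: slice scalef_apply)
  ultimately show False
    using abc by auto
qed

lemma Rone_linear:
  "Rone R 0 = 0"
  "Rone R (x - y) = Rone R x - Rone R y"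
  "Rone R (- x) = - Rone R x"
  "Rone R (scalef c x) = scalef c (Rone R x)"
  by (auto simp: Rone_def fun_eq_iff scalef_apply sum_subtractf sum_negf sum_distrib_left
      ring_distribs mult.left_commute split_beta)

lemma Rtwo_linear:
  "Rtwo R 0 = 0"
  "Rtwo R (x - y) = Rtwo R x - Rtwo R y"
  "Rtwo R (- x) = - Rtwo R x"
  "Rtwo R (scalef c x) = scalef c (Rtwo R x)"
  by (auto simp: Rtwo_def fun_eq_iff scalef_apply sum_subtractf sum_negf sum_distrib_left
      ring_distribs mult.left_commute split_beta)

lemma app2_app2:
  assumes "hecke_symmetry R q"
  shows "app2 R (app2 R x) = scalef (q - 1) (app2 R x) + scalef q x"
proof -
  have "app2 R (app2 R x + x) - scalef q (app2 R x + x) = 0"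
    using assms unfolding hecke_symmetry_def by blast
  moreover have "app2 R (app2 R x + x) = app2 R (app2 R x) + app2 R x"
    by (simp add: app2_def fun_eq_iff scalef_apply sum.distrib ring_distribs)
  ultimately show ?thesis
    by (simp add: fun_eq_iff scalef_apply algebra_simps)
qed

lemma Rone_Rone:
  assumes "hecke_symmetry R q"
  shows "Rone R (Rone R t) = scalef (q - 1) (Rone R t) + scalef q t"
proof -
  have slice: "Rone R t (i, j, m) = app2 R (\<lambda>(k, l). t (k, l, m)) (i, j)" for t i j m
    by (simp add: Rone_def app2_def split_beta)
  have "(\<lambda>(k, l). Rone R t (k, l, m)) = app2 R (\<lambda>(k, l). t (k, l, m))" for m
    by (auto simp: slice fun_eq_iff scalef_apply)
  then show ?thesis
    by (auto simp: fun_eq_iff scalef_apply slice[of "Rone R t"] app2_app2[OF assms] slice)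
qed

lemma Rtwo_Rtwo:
  assumes "hecke_symmetry R q"
  shows "Rtwo R (Rtwo R t) = scalef (q - 1) (Rtwo R t) + scalef q t"
proof -
  have slice: "Rtwo R t (i, j, m) = app2 R (\<lambda>(k, l). t (i, k, l)) (j, m)" for t i j m
    by (simp add: Rtwo_def app2_def split_beta)
  have "(\<lambda>(k, l). Rtwo R t (i, k, l)) = app2 R (\<lambda>(k, l). t (i, k, l))" for i
    by (auto simp: slice fun_eq_iff scalef_apply)
  then show ?thesis
    by (auto simp: fun_eq_iff scalef_apply slice[of "Rtwo R t"] app2_app2[OF assms] slice)
qed

definition Qone ::
    "('k::field,'n::finite) lin2 \<Rightarrow> 'k \<Rightarrow> ('n \<times> 'n \<times> 'n \<Rightarrow> 'k) \<Rightarrow> 'n \<times> 'n \<times> 'n \<Rightarrow> 'k"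
  where "Qone R q t = scalef q t - Rone R t"

definition Qtwo ::
    "('k::field,'n::finite) lin2 \<Rightarrow> 'k \<Rightarrow> ('n \<times> 'n \<times> 'n \<Rightarrow> 'k) \<Rightarrow> 'n \<times> 'n \<times> 'n \<Rightarrow> 'k"
  where "Qtwo R q t = scalef q t - Rtwo R t"

lemma Qone_zero [simp]: "Qone R q 0 = 0"
  by (simp add: Qone_def Rone_linear fun_eq_iff scalef_apply)

lemma Qone_scalef: "Qone R q (scalef c x) = scalef c (Qone R q x)"
  by (simp add: Qone_def Rone_linear fun_eq_iff scalef_apply algebra_simps)

lemma Qtwo_scalef: "Qtwo R q (scalef c x) = scalef c (Qtwo R q x)"
  by (simp add: Qtwo_def Rtwo_linear fun_eq_iff scalef_apply algebra_simps)

lemma Qone_Qone: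
  assumes "hecke_symmetry R q"
  shows "Qone R q (Qone R q t) = scalef (q + 1) (Qone R q t)"
  by (simp add: Qone_def Rone_linear Rone_Rone[OF assms] fun_eq_iff scalef_apply algebra_simps)

lemma Qtwo_Qtwo:
  assumes "hecke_symmetry R q"
  shows "Qtwo R q (Qtwo R q t) = scalef (q + 1) (Qtwo R q t)"
  by (simp add: Qtwo_def Rtwo_linear Rtwo_Rtwo[OF assms] fun_eq_iff scalef_apply algebra_simps)

lemma Qone_Qtwo_Qone:
  assumes "hecke_symmetry R q"
  shows "Qone R q (Qtwo R q (Qone R q t)) = y3 R q t + scalef q (Qone R q t)"
  by (simp add: Qone_def Qtwo_def y3_def Rone_linear Rtwo_linear Rone_Rone[OF assms])
    (simp add: fun_eq_iff scalef_apply algebra_simps power2_eq_square power3_eq_cube)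

lemma Upsilon3_eq_range: "Upsilon3 R q = range (Qone R q) \<inter> range (Qtwo R q)"
proof -
  have "Rone R s - scalef q s = Qone R q (- s)" "Rtwo R s - scalef q s = Qtwo R q (- s)" for s
    by (simp_all add: Qone_def Qtwo_def Rone_linear Rtwo_linear fun_eq_iff scalef_apply)
  then show ?thesis
    unfolding Upsilon3_def by (auto simp: image_iff) (metis minus_minus)+
qed

lemma Upsilon3_eq_eigenspace:
  assumes "hecke_symmetry R q" and "q + 1 \<noteq> 0"
  shows "Upsilon3 R q = {t. Qone R q t = scalef (q + 1) t \<and> Qtwo R q t = scalef (q + 1) t}"
  using range_eq_eigenspace[of "Qone R q" "q + 1"] range_eq_eigenspace[of "Qtwo R q" "q + 1"]
  by (auto simp: Upsilon3_eq_range Qone_scalef Qtwo_scalef Qone_Qone Qtwo_Qtwo assms)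

lemma plus_one_neq_zero_if_y3_eq_zero:
  assumes hecke: "hecke_symmetry R q" and y3: "\<And>t. y3 R q t = 0"
    and "u \<in> Upsilon3 R q" and "u \<noteq> 0"
  shows "q + 1 \<noteq> 0"
proof
  assume "q + 1 = 0"
  from \<open>u \<in> Upsilon3 R q\<close> obtain s s' where u: "u = Qone R q s" "u = Qtwo R q s'"
    unfolding Upsilon3_eq_range by blast
  have "Qtwo R q u = 0"
    using Qtwo_Qtwo[OF hecke, of s'] \<open>q + 1 = 0\<close> unfolding u(2)
    by (simp add: fun_eq_iff scalef_apply)
  then have "scalef q u = 0"
    using Qone_Qtwo_Qone[OF hecke, of s] y3 u(1) by simp
  with \<open>q + 1 = 0\<close> \<open>u \<noteq> 0\<close> show False
    by (simp add: fun_eq_iff scalef_apply eq_neg_iff_add_eq_0[symmetric])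
qed

lemma on_first3_Qtwo_eq_on_last3_Qone: "on_first3 (Qtwo R q) = on_last3 (Qone R q)"
  by (simp add: fun_eq_iff split_paired_All scalef_apply first_slice_def last_slice_def
      Qone_def Qtwo_def Rone_def Rtwo_def)

lemma on_first3_Qone_on_last3_Qtwo_commute:
  "on_first3 (Qone R q) (on_last3 (Qtwo R q) w) = on_last3 (Qtwo R q) (on_first3 (Qone R q) w)"
  by (simp add: fun_eq_iff split_paired_All scalef_apply first_slice_def last_slice_def
      Qone_def Qtwo_def Rone_def Rtwo_def split_beta sum_subtractf sum_distrib_left
      right_diff_distrib)
    (subst sum.swap, simp add: mult.left_commute)

text \<open>On V^(4), Q_1 = on_first3 Qone, Q_2 = on_first3 Qtwo = on_last3 Qone and
  Q_3 = on_last3 Qtwo.\<close>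

lemma first_slice_tensor_last_in_Upsilon3:
  assumes hecke: "hecke_symmetry R q" and y3: "\<And>t. y3 R q t = 0"
    and "q \<noteq> 0" and "q + 1 \<noteq> 0" and "u \<in> Upsilon3 R q"
  shows "first_slice a (tensor_last u v) \<in> Upsilon3 R q"
proof -
  let ?w = "tensor_last u v"
  have u: "Qone R q u = scalef (q + 1) u" "Qtwo R q u = scalef (q + 1) u"
    using \<open>u \<in> Upsilon3 R q\<close> by (simp_all add: Upsilon3_eq_eigenspace hecke \<open>q + 1 \<noteq> 0\<close>)
  have braid: "Qone R q (Qtwo R q (Qone R q t)) = scalef q (Qone R q t)" for t
    using Qone_Qtwo_Qone[OF hecke] y3 by simp
  have w2: "on_last3 (Qone R q) ?w = scalef (q + 1) ?w"
    unfolding on_first3_Qtwo_eq_on_last3_Qone[symmetric]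
    using u(2) by (rule on_first3_tensor_last[OF Qtwo_scalef])
  have "on_last3 (Qtwo R q) ?w = scalef (q + 1) ?w"
  proof (rule common_eigenvector_propagates[where ?Q2.0 = "on_last3 (Qone R q)"])
    show "on_first3 (Qone R q) (on_last3 (Qone R q) (on_first3 (Qone R q) t)) =
        scalef q (on_first3 (Qone R q) t)" for t
      by (simp only: on_first3_Qtwo_eq_on_last3_Qone[symmetric] on_first3_comp braid
          on_first3_scalef_op)
    show "on_last3 (Qone R q) (on_last3 (Qtwo R q) (on_last3 (Qone R q) t)) =
        scalef q (on_last3 (Qone R q) t)" for t
      by (simp only: on_last3_comp braid on_last3_scalef_op)
    show "on_first3 (Qone R q) ?w = scalef (q + 1) ?w"
      using u(1) by (rule on_first3_tensor_last[OF Qone_scalef])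
  qed (simp_all add: on_first3_homogeneous on_last3_homogeneous Qone_scalef Qtwo_scalef
      on_first3_Qone_on_last3_Qtwo_commute w2 \<open>q \<noteq> 0\<close> \<open>q + 1 \<noteq> 0\<close>)
  then have "Qtwo R q (first_slice a ?w) = scalef (q + 1) (first_slice a ?w)"
    by (metis first_slice_on_last3 first_slice_scalef)
  moreover have "Qone R q (first_slice a ?w) = scalef (q + 1) (first_slice a ?w)"
    using w2 by (metis first_slice_on_last3 first_slice_scalef)
  ultimately show ?thesis
    by (simp add: Upsilon3_eq_eigenspace hecke \<open>q + 1 \<noteq> 0\<close>)
qed

theorem corollary2p7:
  fixes R :: "('k::field,'n::finite) lin2" and q :: 'k
  assumes "card (UNIV :: 'n set) > 1"
    and "q \<noteq> 0"
    and "hecke_symmetry R q"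
    and "vector_space.dim (scalef :: 'k \<Rightarrow> ('n \<times> 'n \<times> 'n \<Rightarrow> 'k) \<Rightarrow> _) (Upsilon3 R q) = 1"
  shows "y3 R q \<noteq> (\<lambda>t. 0)"
proof
  assume "y3 R q = (\<lambda>t. 0)"
  then have y3: "y3 R q t = 0" for t
    by (rule fun_cong)
  obtain u where u: "u \<in> Upsilon3 R q" "u \<noteq> 0"
    and generator: "\<And>t. t \<in> Upsilon3 R q \<Longrightarrow> \<exists>c. t = scalef c u"
    using dim_eq_1_generatorE[OF assms(4)] by blast
  have "q + 1 \<noteq> 0"
    using plus_one_neq_zero_if_y3_eq_zero[OF assms(3) y3 u] .
  then have "\<exists>c. first_slice a (tensor_last u v) = scalef c u" for a v
    using first_slice_tensor_last_in_Upsilon3[OF assms(3) y3 assms(2)] u generator by blast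
  then have "card (UNIV :: 'n set) \<le> 1"
    by (rule card_le_1_if_first_slices_multiple[OF \<open>u \<noteq> 0\<close>])
  with assms(1) show False
    by simp
qed

end
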